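(* Let $\Sigma$ be a Markov shift with countable alphabet $I$, let $G$ be a countable group and $\Psi:I^*\to G$ a semigroup homomorphism, and let $\varphi:\Sigma\to\mathbb{R}$ be of medium variation and asymptotically $\alpha$-symmetric with respect to $\Psi$ for some $\alpha\ge1$. Then there exist Hölder continuous functions $\varphi_j:\Sigma\to\mathbb{R}$ and real numbers $D_j\ge1$, $j\in\mathbb{N}$, such that each $\varphi_j$ is asymptotically $\alpha D_j^{1/(2j)}$-symmetric with respect to $\Psi$, $\lim_j D_j^{1/(2j)}=1$, and $\varphi_j\to\varphi$ uniformly on compact subsets of $\Sigma$.
   Context: Markov shift: for a countable alphabet $I\subset\mathbb{N}$ and $A\in\{0,1\}^{I\times I}$, $\Sigma=\{\omega\in I^{\mathbb{N}}: a(\omega_i,\omega_{i+1})=1\ \forall i\}$ with product-of-discrete topology and left shift $\sigma$; $\Sigma^n$ admissible words of length $n$, $\Sigma^*=\bigcup_n\Sigma^n$, $|\omega|$ word length, $[\omega]$ cylinder. $\Psi(\omega)=\Psi(\omega_1)\cdots\Psi(\omega_n)$ for words. $S_n\varphi=\sum_{i<n}\varphi\circ\sigma^i$. Hölder continuous: for some $\beta>0$, $\sup\{|\varphi(\omega)-\varphi(\tau)|e^{\beta|\omega\wedge\tau|}:|\omega\wedge\tau|\ge1\}<\infty$, $|\omega\wedge\tau|$ the length of the longest common initial block. Medium variation: $\varphi$ is continuous and there is $(D_n)$ with $D_n^{1/n}\to1$ such that $e^{S_n\varphi(x)-S_n\varphi(y)}\le D_n$ for all $n$, $\omega\in\Sigma^n$,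 $x,y\in[\omega]$. Asymptotically $\alpha$-symmetric w.r.t. $\Psi$ ($\alpha\ge1$): there exist $n_0$, $(c_n)\subset\mathbb{R}^+$ with $c_n^{1/(2n)}\to\alpha$, $(N_n)\subset\mathbb{N}$ with $N_n/n\to0$, such that for all $g\in G$, $n\ge n_0$: $\sum_{\omega\in\Sigma^n:\Psi(\omega)=g}e^{\sup S_n\varphi|_{[\omega]}}\le c_n\sum_{\omega\in\Sigma^*:\Psi(\omega)=g^{-1},\ n-N_n\le|\omega|\le n+N_n}e^{\sup S_{|\omega|}\varphi|_{[\omega]}}$. *)

theory Defs
  imports "HOL-Analysis.Analysis"
begin

text \<open>Markov shift over alphabet I (subset of nat) with incidence relation A.
  Sequences are indexed from 0; words are lists.\<close>

definition shift_space :: "nat set \<Rightarrow> (nat \<Rightarrow> nat \<Rightarrow> bool) \<Rightarrow> (nat \<Rightarrow> nat) set" where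
  "shift_space I A = {x. \<forall>i. x i \<in> I \<and> A (x i) (x (Suc i))}"

definition shift :: "(nat \<Rightarrow> nat) \<Rightarrow> (nat \<Rightarrow> nat)" where
  "shift x = (\<lambda>i. x (Suc i))"

definition adm_words :: "nat set \<Rightarrow> (nat \<Rightarrow> nat \<Rightarrow> bool) \<Rightarrow> nat \<Rightarrow> nat list set" where
  "adm_words I A n = {w. length w = n \<and> set w \<subseteq> I \<and>
      (\<forall>i. Suc i < n \<longrightarrow> A (w ! i) (w ! Suc i))}"

text \<open>Nonempty admissible words (Sigma^*; Psi is defined on the free semigroup I^*).\<close>
definition adm_words_all :: "nat set \<Rightarrow> (nat \<Rightarrow> nat \<Rightarrow> bool) \<Rightarrow> nat list set" where
  "adm_words_all I A = (\<Union>n\<in>{1..}. adm_words I A n)"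

definition cylinder :: "nat set \<Rightarrow> (nat \<Rightarrow> nat \<Rightarrow> bool) \<Rightarrow> nat list \<Rightarrow> (nat \<Rightarrow> nat) set" where
  "cylinder I A w = {x \<in> shift_space I A. \<forall>i < length w. x i = w ! i}"

definition birkhoff_sum :: "((nat \<Rightarrow> nat) \<Rightarrow> real) \<Rightarrow> nat \<Rightarrow> (nat \<Rightarrow> nat) \<Rightarrow> real" where
  "birkhoff_sum \<phi> n x = (\<Sum>i<n. \<phi> ((shift ^^ i) x))"

text \<open>Psi extended from letters to words: Psi(w) = Psi(w_1) ... Psi(w_n) (group written additively).\<close>
definition word_hom :: "(nat \<Rightarrow> 'g::group_add) \<Rightarrow> nat list \<Rightarrow> 'g" where
  "word_hom \<Psi> w = sum_list (map \<Psi> w)"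

text \<open>exp (sup S_{|w|} phi on [w]); an empty cylinder contributes 0 (= exp(-infinity)).\<close>
definition cyl_weight :: "nat set \<Rightarrow> (nat \<Rightarrow> nat \<Rightarrow> bool) \<Rightarrow> ((nat \<Rightarrow> nat) \<Rightarrow> real) \<Rightarrow> nat list \<Rightarrow> ennreal" where
  "cyl_weight I A \<phi> w =
     (if cylinder I A w = {} then 0
      else ennreal (exp (SUP x\<in>cylinder I A w. birkhoff_sum \<phi> (length w) x)))"

definition holder_continuous :: "nat set \<Rightarrow> (nat \<Rightarrow> nat \<Rightarrow> bool) \<Rightarrow> ((nat \<Rightarrow> nat) \<Rightarrow> real) \<Rightarrow> bool" where
  "holder_continuous I A \<phi> \<longleftrightarrow> (\<exists>\<beta>>0. \<exists>C. \<forall>x\<in>shift_space I A. \<forall>y\<in>shift_space I A. \<forall>n\<ge>1.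
      (\<forall>i<n. x i = y i) \<longrightarrow> \<bar>\<phi> x - \<phi> y\<bar> * exp (\<beta> * real n) \<le> C)"

definition medium_variation :: "nat set \<Rightarrow> (nat \<Rightarrow> nat \<Rightarrow> bool) \<Rightarrow> ((nat \<Rightarrow> nat) \<Rightarrow> real) \<Rightarrow> bool" where
  "medium_variation I A \<phi> \<longleftrightarrow> continuous_on (shift_space I A) \<phi> \<and>
     (\<exists>D :: nat \<Rightarrow> real. (\<lambda>n. D n powr (1 / real n)) \<longlonglongrightarrow> 1 \<and>
        (\<forall>n. \<forall>w\<in>adm_words I A n. \<forall>x\<in>cylinder I A w. \<forall>y\<in>cylinder I A w.
            exp (birkhoff_sum \<phi> n x - birkhoff_sum \<phi> n y) \<le> D n))"

definition asymp_symmetric ::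
  "nat set \<Rightarrow> (nat \<Rightarrow> nat \<Rightarrow> bool) \<Rightarrow> (nat \<Rightarrow> 'g::group_add) \<Rightarrow> ((nat \<Rightarrow> nat) \<Rightarrow> real) \<Rightarrow> real \<Rightarrow> bool" where
  "asymp_symmetric I A \<Psi> \<phi> \<alpha> \<longleftrightarrow>
     (\<exists>n0 :: nat. \<exists>c :: nat \<Rightarrow> real. \<exists>N :: nat \<Rightarrow> nat.
        (\<forall>n. c n > 0) \<and>
        (\<lambda>n. c n powr (1 / (2 * real n))) \<longlonglongrightarrow> \<alpha> \<and>
        (\<lambda>n. real (N n) / real n) \<longlonglongrightarrow> 0 \<and>
        (\<forall>g. \<forall>n\<ge>n0.
           (\<Sum>\<^sub>\<infinity>w\<in>{w\<in>adm_words I A n. word_hom \<Psi> w = g}. cyl_weight I A \<phi> w)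
           \<le> ennreal (c n) *
             (\<Sum>\<^sub>\<infinity>w\<in>{w\<in>adm_words_all I A. word_hom \<Psi> w = - g \<and>
                  real n - real (N n) \<le> real (length w) \<and> real (length w) \<le> real n + real (N n)}.
                cyl_weight I A \<phi> w)))"

end

theory Submission
  imports Defs
begin

text \<open>Freeze a point after its first \<open>l\<close> coordinates and continue it along a fixed admissible
  path starting at its \<open>l\<close>-th letter. The average \<open>\<phi>\<^sub>j\<close> of \<open>\<phi>\<close> over these truncations for
  \<open>l = j + 1, \<dots>, 2j\<close> depends on only \<open>2j\<close> coordinates and has bounded oscillation on
  \<open>1\<close>-cylinders, hence is Hoelder. Since the shift of the \<open>l\<close>-truncation of \<open>x\<close> is the
  \<open>(l - 1)\<close>-truncation of \<open>\<sigma> x\<close>, the Birkhoff sums of \<open>\<phi>\<^sub>j\<close> telescope against those of \<open>\<phi>\<close>: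
  they differ by at most \<open>2 (n + j) L\<^sub>j / j\<close>, where \<open>L\<^sub>j\<close> bounds the variation of \<open>S\<^sub>l \<phi>\<close> on
  \<open>l\<close>-cylinders for \<open>j \<le> l \<le> 2j\<close>. A perturbation of Birkhoff sums of size \<open>a + b n\<close> multiplies
  cylinder weights by at most \<open>exp (a + b n)\<close> and so changes the symmetry constant by the factor
  \<open>exp b = exp (2 L\<^sub>j / j)\<close>, while medium variation gives \<open>L\<^sub>j = o(j)\<close>. Uniform convergence on
  compact sets follows from continuity of \<open>\<phi>\<close> and sequential compactness.\<close>

lemma funpow_shift: "(shift ^^ i) x = (\<lambda>k. x (k + i))"
  by (induction i arbitrary: x) (auto simp: shift_def)

lemma funpow_shift_in_shift_space: "x \<in> shift_space I A \<Longrightarrow> (shift ^^ i) x \<in> shift_space I A"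
  by (auto simp: funpow_shift shift_space_def)

lemma birkhoff_sum_Suc: "birkhoff_sum f (Suc n) x = f x + birkhoff_sum f n (shift x)"
  unfolding birkhoff_sum_def
  by (subst sum.lessThan_Suc_shift) (simp add: funpow_Suc_right del: funpow.simps)

lemma birkhoff_sum_Suc_0 [simp]: "birkhoff_sum f (Suc 0) x = f x"
  by (simp add: birkhoff_sum_def)

lemma prefix_in_adm_words: "x \<in> shift_space I A \<Longrightarrow> map x [0..<l] \<in> adm_words I A l"
  by (auto simp: adm_words_def shift_space_def)

lemma in_cylinder_prefix: "x \<in> shift_space I A \<Longrightarrow> x \<in> cylinder I A (map x [0..<l])"
  by (simp add: cylinder_def)

lemma cylinder_memberD_adm_words:
  assumes "x \<in> cylinder I A w"
  shows "w \<in> adm_words I A (length w)"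
proof -
  have x: "x \<in> shift_space I A" and w: "w = map x [0..<length w]"
    using assms by (auto simp: cylinder_def intro: nth_equalityI)
  show ?thesis using prefix_in_adm_words[OF x] w by metis
qed

definition path_from :: "nat set \<Rightarrow> (nat \<Rightarrow> nat \<Rightarrow> bool) \<Rightarrow> nat \<Rightarrow> nat \<Rightarrow> nat" where
  "path_from I A a = (SOME z. z \<in> shift_space I A \<and> z 0 = a)"

lemma path_from:
  assumes "x \<in> shift_space I A"
  shows "path_from I A (x m) \<in> shift_space I A" "path_from I A (x m) 0 = x m"
proof -
  have "(shift ^^ m) x \<in> shift_space I A \<and> (shift ^^ m) x 0 = x m"
    using funpow_shift_in_shift_space[OF assms] by (simp add: funpow_shift)
  then have "path_from I A (x m) \<in> shift_space I A \<and> path_from I A (x m) 0 = x m"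
    unfolding path_from_def by (rule someI[where P = "\<lambda>z. z \<in> shift_space I A \<and> z 0 = x m"])
  then show "path_from I A (x m) \<in> shift_space I A" "path_from I A (x m) 0 = x m" by auto
qed

definition extend_prefix :: "nat set \<Rightarrow> (nat \<Rightarrow> nat \<Rightarrow> bool) \<Rightarrow> nat \<Rightarrow> (nat \<Rightarrow> nat) \<Rightarrow> nat \<Rightarrow> nat" where
  "extend_prefix I A l x = (\<lambda>k. if k < l then x k else path_from I A (x (l - 1)) (k + 1 - l))"

lemma extend_prefix_less: "k < l \<Longrightarrow> extend_prefix I A l x k = x k"
  by (simp add: extend_prefix_def)

lemma extend_prefix_in_shift_space:
  assumes x: "x \<in> shift_space I A" and l: "1 \<le> l"
  shows "extend_prefix I A l x \<in> shift_space I A"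
proof -
  let ?z = "path_from I A (x (l - 1))"
  have z: "?z \<in> shift_space I A" "?z 0 = x (l - 1)" using path_from[OF x] by auto
  have "extend_prefix I A l x i \<in> I" for i
    using x z by (auto simp: extend_prefix_def shift_space_def)
  moreover have "A (extend_prefix I A l x i) (extend_prefix I A l x (Suc i))" for i
  proof -
    consider "Suc i < l" | "Suc i = l" | "l \<le> i" by linarith
    then show ?thesis
    proof cases
      case 1
      then show ?thesis using x by (simp add: extend_prefix_def shift_space_def)
    next
      case 2
      then have "extend_prefix I A l x i = ?z 0" "extend_prefix I A l x (Suc i) = ?z 1"
        using z by (auto simp: extend_prefix_def)
      then show ?thesis using z(1) by (simp add: shift_space_def)
    next
      case 3
      then have "extend_prefix I A l x i = ?z (i + 1 - l)"
        "extend_prefix I A l x (Suc i) = ?z (Suc (i + 1 - l))"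
        by (auto simp: extend_prefix_def Suc_diff_le)
      then show ?thesis using z(1) by (simp add: shift_space_def)
    qed
  qed
  ultimately show ?thesis by (simp add: shift_space_def)
qed

lemma extend_prefix_in_cylinder:
  assumes "x \<in> shift_space I A" "1 \<le> l" "m \<le> l"
  shows "extend_prefix I A l x \<in> cylinder I A (map x [0..<m])"
  using extend_prefix_in_shift_space[OF assms(1,2)] assms(3)
  by (auto simp: cylinder_def extend_prefix_less)

lemma shift_extend_prefix:
  assumes "2 \<le> l"
  shows "shift (extend_prefix I A l x) = extend_prefix I A (l - 1) (shift x)"
proof
  fix k
  have "Suc (l - Suc (Suc 0)) = l - Suc 0" using assms by linarith
  then show "shift (extend_prefix I A l x) k = extend_prefix I A (l - 1) (shift x) k"
    using assms by (auto simp: shift_def extend_prefix_def Suc_diff_le)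
qed

lemma tendsto_nat_fun_iff:
  fixes X :: "'a \<Rightarrow> nat \<Rightarrow> nat"
  shows "(X \<longlongrightarrow> x) F \<longleftrightarrow> (\<forall>m. \<forall>\<^sub>F k in F. X k m = x m)"
proof -
  have "(X \<longlongrightarrow> x) F \<longleftrightarrow> limitin (product_topology (\<lambda>_. euclidean) UNIV) X x F"
    by (metis euclidean_product_topology limitin_canonical_iff)
  also have "\<dots> \<longleftrightarrow> (\<forall>m. ((\<lambda>k. X k m) \<longlongrightarrow> x m) F)"
    by (simp add: limitin_componentwise)
  finally show ?thesis by (simp add: nhds_discrete filterlim_principal)
qed

lemma extend_prefix_tendsto:
  assumes X: "(X \<longlongrightarrow> x) F" and L: "filterlim L at_top F"
  shows "((\<lambda>k. extend_prefix I A (L k) (X k)) \<longlongrightarrow> x) F"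
  unfolding tendsto_nat_fun_iff
proof
  fix m
  have "\<forall>\<^sub>F k in F. X k m = x m" using X by (simp add: tendsto_nat_fun_iff)
  moreover have "\<forall>\<^sub>F k in F. Suc m \<le> L k" using L by (simp add: filterlim_at_top)
  ultimately show "\<forall>\<^sub>F k in F. extend_prefix I A (L k) (X k) m = x m"
    by eventually_elim (simp add: extend_prefix_less)
qed

definition sum_variation_bounded ::
  "nat set \<Rightarrow> (nat \<Rightarrow> nat \<Rightarrow> bool) \<Rightarrow> ((nat \<Rightarrow> nat) \<Rightarrow> real) \<Rightarrow> (nat \<Rightarrow> real) \<Rightarrow> bool" where
  "sum_variation_bounded I A \<phi> V \<longleftrightarrow>
     (\<forall>n. \<forall>w\<in>adm_words I A n. \<forall>x\<in>cylinder I A w. \<forall>y\<in>cylinder I A w.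
        \<bar>birkhoff_sum \<phi> n x - birkhoff_sum \<phi> n y\<bar> \<le> V n)"

lemma sum_variation_boundedD:
  assumes "sum_variation_bounded I A \<phi> V" "x \<in> cylinder I A w" "y \<in> cylinder I A w"
  shows "\<bar>birkhoff_sum \<phi> (length w) x - birkhoff_sum \<phi> (length w) y\<bar> \<le> V (length w)"
  using assms cylinder_memberD_adm_words[OF assms(2)] unfolding sum_variation_bounded_def by blast

lemma ln_max_one_div_tendsto_zero:
  assumes "(\<lambda>n. D n powr (1 / real n)) \<longlonglongrightarrow> 1"
  shows "(\<lambda>n. ln (max 1 (D n)) / real n) \<longlonglongrightarrow> 0"
proof (rule tendsto_sandwich[of "\<lambda>_. 0" _ _ "\<lambda>n. ln (max 1 (D n powr (1 / real n)))"])
  show "\<forall>\<^sub>F n in sequentially. ln (max 1 (D n)) / real n \<le> ln (max 1 (D n powr (1 / real n)))"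
  proof (rule eventually_sequentiallyI[of 1])
    fix n :: nat assume "1 \<le> n"
    show "ln (max 1 (D n)) / real n \<le> ln (max 1 (D n powr (1 / real n)))"
    proof (cases "1 \<le> D n")
      case True
      then have "ln (max 1 (D n)) / real n = ln (D n powr (1 / real n))" by simp
      also have "\<dots> \<le> ln (max 1 (D n powr (1 / real n)))"
        using True by (subst ln_le_cancel_iff) auto
      finally show ?thesis .
    qed simp
  qed
  have "(\<lambda>n. ln (max 1 (D n powr (1 / real n)))) \<longlonglongrightarrow> ln (max 1 1)"
    by (intro tendsto_intros assms) auto
  then show "(\<lambda>n. ln (max 1 (D n powr (1 / real n)))) \<longlonglongrightarrow> 0" by simp
qed auto

lemma medium_variation_imp_sum_variation_bounded:
  assumes "medium_variation I A \<phi>"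
  obtains V where "sum_variation_bounded I A \<phi> V" "\<And>n. 0 \<le> V n" "(\<lambda>n. V n / real n) \<longlonglongrightarrow> 0"
proof -
  obtain D where D: "(\<lambda>n. D n powr (1 / real n)) \<longlonglongrightarrow> 1"
    and exp_le: "\<And>n w x y. w \<in> adm_words I A n \<Longrightarrow> x \<in> cylinder I A w \<Longrightarrow> y \<in> cylinder I A w \<Longrightarrow>
            exp (birkhoff_sum \<phi> n x - birkhoff_sum \<phi> n y) \<le> D n"
    using assms unfolding medium_variation_def by blast
  have le_ln: "t \<le> ln (max 1 d)" if "exp t \<le> d" for t d :: real
  proof -
    have "0 < d" using that exp_gt_zero[of t] by linarith
    then have "t \<le> ln d" using that by (metis exp_le_cancel_iff exp_ln)
    also have "\<dots> \<le> ln (max 1 d)" using \<open>0 < d\<close> by simp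
    finally show ?thesis .
  qed
  have "sum_variation_bounded I A \<phi> (\<lambda>n. ln (max 1 (D n)))"
    unfolding sum_variation_bounded_def
  proof (intro allI ballI)
    fix n w x y assume "w \<in> adm_words I A n" "x \<in> cylinder I A w" "y \<in> cylinder I A w"
    then have "birkhoff_sum \<phi> n x - birkhoff_sum \<phi> n y \<le> ln (max 1 (D n))"
      "birkhoff_sum \<phi> n y - birkhoff_sum \<phi> n x \<le> ln (max 1 (D n))"
      by (blast intro: le_ln exp_le)+
    then show "\<bar>birkhoff_sum \<phi> n x - birkhoff_sum \<phi> n y\<bar> \<le> ln (max 1 (D n))" by linarith
  qed
  then show ?thesis using that ln_max_one_div_tendsto_zero[OF D] by simp
qed

lemma bdd_above_birkhoff_sum_cylinder:
  assumes "sum_variation_bounded I A \<phi> V"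
  shows "bdd_above (birkhoff_sum \<phi> (length w) ` cylinder I A w)"
proof (cases "cylinder I A w = {}")
  case False
  then obtain y where y: "y \<in> cylinder I A w" by auto
  show ?thesis
  proof (rule bdd_aboveI2)
    fix x assume "x \<in> cylinder I A w"
    then show "birkhoff_sum \<phi> (length w) x \<le> birkhoff_sum \<phi> (length w) y + V (length w)"
      using sum_variation_boundedD[OF assms _ y] by (smt (verit))
  qed
qed simp

lemma cyl_weight_le_exp_mult:
  assumes le: "\<And>x. x \<in> cylinder I A w \<Longrightarrow> birkhoff_sum \<psi> (length w) x \<le> birkhoff_sum \<phi> (length w) x + \<Delta>"
    and bdd: "bdd_above (birkhoff_sum \<phi> (length w) ` cylinder I A w)"
  shows "cyl_weight I A \<psi> w \<le> ennreal (exp \<Delta>) * cyl_weight I A \<phi> w"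
proof (cases "cylinder I A w = {}")
  case False
  let ?C = "cylinder I A w"
  have "(SUP x\<in>?C. birkhoff_sum \<psi> (length w) x) \<le> (SUP x\<in>?C. birkhoff_sum \<phi> (length w) x) + \<Delta>"
  proof (rule cSUP_least[OF False])
    fix x assume "x \<in> ?C"
    then show "birkhoff_sum \<psi> (length w) x \<le> (SUP x\<in>?C. birkhoff_sum \<phi> (length w) x) + \<Delta>"
      using le cSUP_upper[OF _ bdd] by (smt (verit))
  qed
  then have "exp (SUP x\<in>?C. birkhoff_sum \<psi> (length w) x)
      \<le> exp \<Delta> * exp (SUP x\<in>?C. birkhoff_sum \<phi> (length w) x)"
    by (simp add: exp_add[symmetric] add.commute)
  then show ?thesis using False by (simp add: cyl_weight_def ennreal_mult[symmetric] ennreal_leI)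
qed (simp add: cyl_weight_def)

lemma infsum_cmult_right_ennreal:
  fixes f :: "'a \<Rightarrow> ennreal"
  assumes "c < top"
  shows "(\<Sum>\<^sub>\<infinity>x\<in>A. c * f x) = c * (\<Sum>\<^sub>\<infinity>x\<in>A. f x)"
proof -
  have "(f has_sum infsum f A) A" by (simp add: nonneg_summable_on_complete)
  then have "((\<lambda>F. c * sum f F) \<longlongrightarrow> c * infsum f A) (finite_subsets_at_top A)"
    unfolding has_sum_def by (rule ennreal_tendsto_cmult[OF assms])
  then have "((\<lambda>x. c * f x) has_sum (c * infsum f A)) A"
    by (simp add: has_sum_def sum_distrib_left)
  then show ?thesis by (rule infsumI)
qed

lemma infsum_cyl_weight_le_exp_mult:
  assumes le: "\<And>w x. w \<in> W \<Longrightarrow> x \<in> cylinder I A w \<Longrightarrow>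
      birkhoff_sum \<psi> (length w) x \<le> birkhoff_sum \<phi> (length w) x + \<Delta>"
    and bdd: "\<And>w. bdd_above (birkhoff_sum \<phi> (length w) ` cylinder I A w)"
  shows "(\<Sum>\<^sub>\<infinity>w\<in>W. cyl_weight I A \<psi> w) \<le> ennreal (exp \<Delta>) * (\<Sum>\<^sub>\<infinity>w\<in>W. cyl_weight I A \<phi> w)"
proof -
  have "(\<Sum>\<^sub>\<infinity>w\<in>W. cyl_weight I A \<psi> w) \<le> (\<Sum>\<^sub>\<infinity>w\<in>W. ennreal (exp \<Delta>) * cyl_weight I A \<phi> w)"
    using le bdd by (intro infsum_mono cyl_weight_le_exp_mult) (auto intro: nonneg_summable_on_complete)
  also have "\<dots> = ennreal (exp \<Delta>) * (\<Sum>\<^sub>\<infinity>w\<in>W. cyl_weight I A \<phi> w)"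
    by (rule infsum_cmult_right_ennreal) simp
  finally show ?thesis .
qed

lemma root_of_perturbed_constant_tendsto:
  fixes c :: "nat \<Rightarrow> real" and N :: "nat \<Rightarrow> nat"
  assumes c_pos: "\<And>n. 0 < c n" and c: "(\<lambda>n. c n powr (1 / (2 * real n))) \<longlonglongrightarrow> \<alpha>"
    and N: "(\<lambda>n. real (N n) / real n) \<longlonglongrightarrow> 0"
  shows "(\<lambda>n. (c n * exp (2 * a + (2 * real n + real (N n)) * b)) powr (1 / (2 * real n)))
           \<longlonglongrightarrow> \<alpha> * exp b"
proof -
  have eq: "(c n * exp (2 * a + (2 * real n + real (N n)) * b)) powr (1 / (2 * real n))
      = c n powr (1 / (2 * real n)) * exp (a / real n + b + real (N n) / real n * (b / 2))"
    if "1 \<le> n" for n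
  proof -
    have "(2 * a + (2 * real n + real (N n)) * b) * (1 / (2 * real n))
        = a / real n + b + real (N n) / real n * (b / 2)"
      using that by (simp add: field_simps)
    moreover have "(c n * exp (2 * a + (2 * real n + real (N n)) * b)) powr (1 / (2 * real n))
        = c n powr (1 / (2 * real n)) * exp ((2 * a + (2 * real n + real (N n)) * b) * (1 / (2 * real n)))"
      using c_pos[of n] by (subst powr_mult) (auto simp: powr_def)
    ultimately show ?thesis by simp
  qed
  have "(\<lambda>n. c n powr (1 / (2 * real n)) * exp (a / real n + b + real (N n) / real n * (b / 2)))
      \<longlonglongrightarrow> \<alpha> * exp (0 + b + 0 * (b / 2))"
    by (intro tendsto_intros c N tendsto_divide_0[OF tendsto_const] filterlim_real_sequentially)
  then have "(\<lambda>n. c n powr (1 / (2 * real n)) * exp (a / real n + b + real (N n) / real n * (b / 2)))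
      \<longlonglongrightarrow> \<alpha> * exp b" by simp
  then show ?thesis
    by (rule Lim_transform_eventually) (use eq in \<open>auto intro!: eventually_sequentiallyI[of 1]\<close>)
qed

lemma infsum_cyl_weight_ratio_perturb:
  assumes var: "sum_variation_bounded I A \<phi> V" and b: "0 \<le> b"
    and close: "\<And>w x. x \<in> cylinder I A w \<Longrightarrow>
       \<bar>birkhoff_sum \<psi> (length w) x - birkhoff_sum \<phi> (length w) x\<bar> \<le> a + b * real (length w)"
    and S: "\<And>w. w \<in> S \<Longrightarrow> real (length w) \<le> n" and T: "\<And>w. w \<in> T \<Longrightarrow> real (length w) \<le> m"
    and ratio: "(\<Sum>\<^sub>\<infinity>w\<in>S. cyl_weight I A \<phi> w) \<le> ennreal c * (\<Sum>\<^sub>\<infinity>w\<in>T. cyl_weight I A \<phi> w)"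
    and c: "0 \<le> c"
  shows "(\<Sum>\<^sub>\<infinity>w\<in>S. cyl_weight I A \<psi> w)
    \<le> ennreal (c * exp (2 * a + (n + m) * b)) * (\<Sum>\<^sub>\<infinity>w\<in>T. cyl_weight I A \<psi> w)"
proof -
  have bdd_\<phi>: "bdd_above (birkhoff_sum \<phi> (length w) ` cylinder I A w)" for w
    using bdd_above_birkhoff_sum_cylinder[OF var] .
  have bdd_\<psi>: "bdd_above (birkhoff_sum \<psi> (length w) ` cylinder I A w)" for w
  proof -
    obtain M where "\<And>x. x \<in> cylinder I A w \<Longrightarrow> birkhoff_sum \<phi> (length w) x \<le> M"
      using bdd_\<phi>[of w] by (auto simp: bdd_above_def)
    then show ?thesis
      using close by (intro bdd_aboveI2[where M = "M + (a + b * real (length w))"]) (smt (verit))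
  qed
  have close_le: "\<bar>birkhoff_sum \<psi> (length w) x - birkhoff_sum \<phi> (length w) x\<bar> \<le> a + b * k"
    if "x \<in> cylinder I A w" "real (length w) \<le> k" for w x k
    using close[OF that(1)] mult_left_mono[OF that(2) b] by linarith
  have "(\<Sum>\<^sub>\<infinity>w\<in>S. cyl_weight I A \<psi> w) \<le> ennreal (exp (a + b * n)) * (\<Sum>\<^sub>\<infinity>w\<in>S. cyl_weight I A \<phi> w)"
  proof (rule infsum_cyl_weight_le_exp_mult[OF _ bdd_\<phi>])
    fix w x assume "w \<in> S" "x \<in> cylinder I A w"
    from close_le[OF this(2) S[OF this(1)]]
    show "birkhoff_sum \<psi> (length w) x \<le> birkhoff_sum \<phi> (length w) x + (a + b * n)"
      by (simp add: abs_le_iff)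
  qed
  also have "\<dots> \<le> ennreal (exp (a + b * n)) * (ennreal c * (\<Sum>\<^sub>\<infinity>w\<in>T. cyl_weight I A \<phi> w))"
    using ratio by (rule mult_left_mono) simp
  also have "(\<Sum>\<^sub>\<infinity>w\<in>T. cyl_weight I A \<phi> w)
      \<le> ennreal (exp (a + b * m)) * (\<Sum>\<^sub>\<infinity>w\<in>T. cyl_weight I A \<psi> w)"
  proof (rule infsum_cyl_weight_le_exp_mult[OF _ bdd_\<psi>])
    fix w x assume "w \<in> T" "x \<in> cylinder I A w"
    from close_le[OF this(2) T[OF this(1)]]
    show "birkhoff_sum \<phi> (length w) x \<le> birkhoff_sum \<psi> (length w) x + (a + b * m)"
      by (simp add: abs_le_iff)
  qed
  finally have "(\<Sum>\<^sub>\<infinity>w\<in>S. cyl_weight I A \<psi> w)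
      \<le> ennreal (exp (a + b * n)) * (ennreal c * (ennreal (exp (a + b * m)) * (\<Sum>\<^sub>\<infinity>w\<in>T. cyl_weight I A \<psi> w)))"
    by (simp add: mult_left_mono)
  also have "\<dots> = ennreal (c * exp (2 * a + (n + m) * b)) * (\<Sum>\<^sub>\<infinity>w\<in>T. cyl_weight I A \<psi> w)"
  proof -
    have factor: "c * exp (2 * a + (n + m) * b) = exp (a + b * n) * c * exp (a + b * m)"
      by (simp add: exp_add[symmetric] algebra_simps)
    show ?thesis unfolding factor using c by (simp add: ennreal_mult mult.assoc)
  qed
  finally show ?thesis .
qed

lemma asymp_symmetric_perturb:
  fixes \<Psi> :: "nat \<Rightarrow> 'g::group_add"
  assumes sym: "asymp_symmetric I A \<Psi> \<phi> \<alpha>"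
    and var: "sum_variation_bounded I A \<phi> V"
    and b: "0 \<le> b"
    and close: "\<And>w x. x \<in> cylinder I A w \<Longrightarrow>
       \<bar>birkhoff_sum \<psi> (length w) x - birkhoff_sum \<phi> (length w) x\<bar> \<le> a + b * real (length w)"
  shows "asymp_symmetric I A \<Psi> \<psi> (\<alpha> * exp b)"
proof -
  obtain n0 c N where c_pos: "\<forall>n. 0 < c n" and c: "(\<lambda>n. c n powr (1 / (2 * real n))) \<longlonglongrightarrow> \<alpha>"
    and N: "(\<lambda>n. real (N n) / real n) \<longlonglongrightarrow> 0"
    and ineq: "\<And>g n. n0 \<le> n \<Longrightarrow>
           (\<Sum>\<^sub>\<infinity>w\<in>{w\<in>adm_words I A n. word_hom \<Psi> w = g}. cyl_weight I A \<phi> w)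
           \<le> ennreal (c n) *
             (\<Sum>\<^sub>\<infinity>w\<in>{w\<in>adm_words_all I A. word_hom \<Psi> w = - g \<and>
                  real n - real (N n) \<le> real (length w) \<and> real (length w) \<le> real n + real (N n)}.
                cyl_weight I A \<phi> w)"
    using sym unfolding asymp_symmetric_def by blast
  define c' where "c' n = c n * exp (2 * a + (2 * real n + real (N n)) * b)" for n
  have "(\<Sum>\<^sub>\<infinity>w\<in>{w\<in>adm_words I A n. word_hom \<Psi> w = g}. cyl_weight I A \<psi> w)
           \<le> ennreal (c' n) *
             (\<Sum>\<^sub>\<infinity>w\<in>{w\<in>adm_words_all I A. word_hom \<Psi> w = - g \<and>
                  real n - real (N n) \<le> real (length w) \<and> real (length w) \<le> real n + real (N n)}.
                cyl_weight I A \<psi> w)" if "n0 \<le> n" for g n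
  proof -
    have "real n + (real n + real (N n)) = 2 * real n + real (N n)" by simp
    then show ?thesis
      using infsum_cyl_weight_ratio_perturb[OF var b close _ _ ineq[OF that],
          where n = "real n" and m = "real n + real (N n)"]
        c_pos by (simp add: c'_def adm_words_def less_imp_le)
  qed
  moreover have "\<forall>n. 0 < c' n" using c_pos by (simp add: c'_def)
  moreover have "(\<lambda>n. c' n powr (1 / (2 * real n))) \<longlonglongrightarrow> \<alpha> * exp b"
    unfolding c'_def by (rule root_of_perturbed_constant_tendsto[OF c_pos[rule_format] c N])
  ultimately show ?thesis unfolding asymp_symmetric_def using N by blast
qed

definition window_max :: "(nat \<Rightarrow> real) \<Rightarrow> nat \<Rightarrow> real" where
  "window_max V j = Max (V ` {j..2 * j})"

lemma window_max_ge: "j \<le> l \<Longrightarrow> l \<le> 2 * j \<Longrightarrow> V l \<le> window_max V j"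
  unfolding window_max_def by (rule Max_ge) auto

lemma window_max_nonneg:
  assumes "\<And>n. 0 \<le> V n"
  shows "0 \<le> window_max V j"
proof -
  have "V j \<le> window_max V j" by (rule window_max_ge) auto
  then show ?thesis using assms[of j] by linarith
qed

lemma window_max_div_tendsto_zero:
  assumes V_nonneg: "\<And>n. 0 \<le> V n" and V: "(\<lambda>n. V n / real n) \<longlonglongrightarrow> 0"
  shows "(\<lambda>j. window_max V j / real j) \<longlonglongrightarrow> 0"
proof -
  have "window_max V j \<in> V ` {j..2 * j}" for j
    unfolding window_max_def by (rule Max_in) auto
  then have "\<forall>j. \<exists>l. j \<le> l \<and> l \<le> 2 * j \<and> window_max V j = V l"
    by fastforce
  then obtain l where l: "\<And>j. j \<le> l j \<and> l j \<le> 2 * j \<and> window_max V j = V (l j)"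
    by metis
  have "filterlim l at_top sequentially"
    using l by (intro filterlim_at_top_mono[OF filterlim_ident]) auto
  then have V_l: "(\<lambda>j. V (l j) / real (l j)) \<longlonglongrightarrow> 0"
    using filterlim_compose[OF V] by blast
  show ?thesis
  proof (rule tendsto_sandwich[of "\<lambda>_. 0" _ _ "\<lambda>j. 2 * (V (l j) / real (l j))"])
    show "\<forall>\<^sub>F j in sequentially. 0 \<le> window_max V j / real j"
      using window_max_nonneg[OF V_nonneg] by simp
    show "\<forall>\<^sub>F j in sequentially. window_max V j / real j \<le> 2 * (V (l j) / real (l j))"
    proof (rule eventually_sequentiallyI[of 1])
      fix j :: nat assume "1 \<le> j"
      moreover have "V (l j) * real (l j) \<le> V (l j) * (2 * real j)"
        using l[of j] V_nonneg by (intro mult_left_mono) auto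
      ultimately show "window_max V j / real j \<le> 2 * (V (l j) / real (l j))"
        using l[of j] by (simp add: field_simps)
    qed
    show "(\<lambda>j. 2 * (V (l j) / real (l j))) \<longlonglongrightarrow> 0"
      using tendsto_mult_right_zero[OF V_l] by simp
  qed simp
qed

lemma abs_sum_window_telescope_le:
  fixes e :: "nat \<Rightarrow> nat \<Rightarrow> real"
  assumes j: "1 \<le> j" and e: "\<And>i l. j \<le> l \<Longrightarrow> l \<le> 2 * j \<Longrightarrow> \<bar>e i l\<bar> \<le> L"
  shows "\<bar>\<Sum>i<n. \<Sum>l\<in>{j+1..2*j}. e i l - e (Suc i) (l - 1)\<bar> \<le> 2 * (real n + real j) * L"
proof -
  define H where "H i = (\<Sum>l\<in>{j..<2*j}. e i l)" for i
  have shifted: "(\<Sum>l\<in>{j+1..2*j}. e i l) = H i + e i (2*j) - e i j" for i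
  proof -
    have "{j+1..2*j} = insert (2*j) {j<..<2*j}" "{j..<2*j} = insert j {j<..<2*j}" using j by auto
    then show ?thesis unfolding H_def by simp
  qed
  have reindexed: "(\<Sum>l\<in>{j+1..2*j}. e (Suc i) (l - 1)) = H (Suc i)" for i
    unfolding H_def using j by (intro sum.reindex_bij_witness[of _ "\<lambda>l. l + 1" "\<lambda>l. l - 1"]) auto
  have telescope: "(\<Sum>i<n. \<Sum>l\<in>{j+1..2*j}. e i l - e (Suc i) (l - 1))
      = H 0 - H n + (\<Sum>i<n. e i (2*j) - e i j)"
  proof (induction n)
    case (Suc n)
    have "(\<Sum>l\<in>{j+1..2*j}. e n l - e (Suc n) (l - 1)) = H n + e n (2*j) - e n j - H (Suc n)"
      by (simp only: sum_subtractf shifted reindexed)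
    with Suc show ?case by simp
  qed simp
  have H_le: "\<bar>H i\<bar> \<le> real j * L" for i
  proof -
    have "\<bar>H i\<bar> \<le> (\<Sum>l\<in>{j..<2*j}. \<bar>e i l\<bar>)" unfolding H_def by (rule sum_abs)
    also have "\<dots> \<le> (\<Sum>l\<in>{j..<2*j}. L)" by (intro sum_mono e) auto
    finally show ?thesis by simp
  qed
  have ends_le: "\<bar>\<Sum>i<n. e i (2*j) - e i j\<bar> \<le> real n * (2 * L)"
  proof -
    have "\<bar>\<Sum>i<n. e i (2*j) - e i j\<bar> \<le> (\<Sum>i<n. \<bar>e i (2*j) - e i j\<bar>)" by (rule sum_abs)
    also have "\<dots> \<le> (\<Sum>i<n. 2 * L)"
    proof (rule sum_mono)
      fix i
      have "\<bar>e i (2*j)\<bar> \<le> L" "\<bar>e i j\<bar> \<le> L" using e j by auto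
      then show "\<bar>e i (2*j) - e i j\<bar> \<le> 2 * L" by linarith
    qed
    finally show ?thesis by simp
  qed
  have "\<bar>H 0 - H n + (\<Sum>i<n. e i (2*j) - e i j)\<bar> \<le> real j * L + real j * L + real n * (2 * L)"
    using H_le[of 0] H_le[of n] ends_le by linarith
  then show ?thesis unfolding telescope by (simp add: algebra_simps)
qed

definition window_average ::
  "nat set \<Rightarrow> (nat \<Rightarrow> nat \<Rightarrow> bool) \<Rightarrow> ((nat \<Rightarrow> nat) \<Rightarrow> real) \<Rightarrow> nat \<Rightarrow> (nat \<Rightarrow> nat) \<Rightarrow> real" where
  "window_average I A \<phi> j x = (\<Sum>l\<in>{j+1..2*j}. \<phi> (extend_prefix I A l x)) / real j"

lemma birkhoff_sum_extend_prefix: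
  assumes "2 \<le> l"
  shows "birkhoff_sum \<phi> l (extend_prefix I A l x)
    = \<phi> (extend_prefix I A l x) + birkhoff_sum \<phi> (l - 1) (extend_prefix I A (l - 1) (shift x))"
proof -
  have "l = Suc (l - 1)" using assms by simp
  then show ?thesis using shift_extend_prefix[OF assms] by (metis birkhoff_sum_Suc)
qed

lemma birkhoff_sum_window_average_close:
  assumes var: "sum_variation_bounded I A \<phi> V" and x: "x \<in> shift_space I A" and j: "1 \<le> j"
  shows "\<bar>birkhoff_sum (window_average I A \<phi> j) n x - birkhoff_sum \<phi> n x\<bar>
    \<le> 2 * (real n + real j) * window_max V j / real j"
proof -
  define y where "y i = (shift ^^ i) x" for i
  have y: "y i \<in> shift_space I A" for i unfolding y_def using funpow_shift_in_shift_space[OF x] .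
  have y_Suc: "shift (y i) = y (Suc i)" for i unfolding y_def by simp
  define e where "e i l = birkhoff_sum \<phi> l (extend_prefix I A l (y i)) - birkhoff_sum \<phi> l (y i)" for i l
  have e_le: "\<bar>e i l\<bar> \<le> window_max V j" if "j \<le> l" "l \<le> 2 * j" for i l
  proof -
    have "\<bar>e i l\<bar> \<le> V l"
      using sum_variation_boundedD[OF var extend_prefix_in_cylinder[OF y _ order.refl]
          in_cylinder_prefix[OF y]] that j unfolding e_def by simp
    also have "\<dots> \<le> window_max V j" using that by (rule window_max_ge)
    finally show ?thesis .
  qed
  have step: "\<phi> (extend_prefix I A l (y i)) - \<phi> (y i) = e i l - e (Suc i) (l - 1)" if "2 \<le> l" for i l
  proof -
    have "birkhoff_sum \<phi> l (y i) = \<phi> (y i) + birkhoff_sum \<phi> (l - 1) (y (Suc i))"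
      using that birkhoff_sum_Suc[of \<phi> "l - 1" "y i"] by (simp add: y_Suc)
    then show ?thesis using birkhoff_sum_extend_prefix[OF that, of \<phi> I A "y i"]
      unfolding e_def y_Suc by simp
  qed
  have average_step: "window_average I A \<phi> j (y i) - \<phi> (y i)
      = (\<Sum>l\<in>{j+1..2*j}. e i l - e (Suc i) (l - 1)) / real j" for i
  proof -
    have "(\<Sum>l\<in>{j+1..2*j}. e i l - e (Suc i) (l - 1)) = (\<Sum>l\<in>{j+1..2*j}. \<phi> (extend_prefix I A l (y i)) - \<phi> (y i))"
      using j by (intro sum.cong) (auto simp: step)
    then show ?thesis using j unfolding window_average_def by (simp add: sum_subtractf field_simps)
  qed
  have "birkhoff_sum (window_average I A \<phi> j) n x - birkhoff_sum \<phi> n x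
      = (\<Sum>i<n. window_average I A \<phi> j (y i) - \<phi> (y i))"
    unfolding birkhoff_sum_def y_def by (simp add: sum_subtractf)
  also have "\<dots> = (\<Sum>i<n. \<Sum>l\<in>{j+1..2*j}. e i l - e (Suc i) (l - 1)) / real j"
    by (simp only: average_step sum_divide_distrib)
  moreover have "\<bar>\<Sum>i<n. \<Sum>l\<in>{j+1..2*j}. e i l - e (Suc i) (l - 1)\<bar> \<le> 2 * (real n + real j) * window_max V j"
    using j e_le by (rule abs_sum_window_telescope_le)
  ultimately show ?thesis using j by (simp add: divide_right_mono)
qed

lemma holder_continuous_window_average:
  assumes var: "sum_variation_bounded I A \<phi> V" and j: "1 \<le> j"
  shows "holder_continuous I A (window_average I A \<phi> j)"
proof -
  have diff_le: "\<bar>window_average I A \<phi> j x - window_average I A \<phi> j y\<bar> \<le> \<bar>V 1\<bar>"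
    if x: "x \<in> shift_space I A" and y: "y \<in> shift_space I A" and "x 0 = y 0" for x y
  proof -
    have "\<bar>\<phi> (extend_prefix I A l x) - \<phi> (extend_prefix I A l y)\<bar> \<le> \<bar>V 1\<bar>" if l: "1 \<le> l" for l
    proof -
      have "extend_prefix I A l y \<in> cylinder I A (map x [0..<1])"
        using extend_prefix_in_cylinder[OF y l l] \<open>x 0 = y 0\<close> by simp
      from sum_variation_boundedD[OF var extend_prefix_in_cylinder[OF x l l] this]
      show ?thesis by simp
    qed
    then have "\<bar>\<Sum>l\<in>{j+1..2*j}. \<phi> (extend_prefix I A l x) - \<phi> (extend_prefix I A l y)\<bar>
        \<le> (\<Sum>l\<in>{j+1..2*j}. \<bar>V 1\<bar>)"
      by (intro order.trans[OF sum_abs] sum_mono) auto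
    moreover have "window_average I A \<phi> j x - window_average I A \<phi> j y
        = (\<Sum>l\<in>{j+1..2*j}. \<phi> (extend_prefix I A l x) - \<phi> (extend_prefix I A l y)) / real j"
      unfolding window_average_def by (simp add: sum_subtractf diff_divide_distrib)
    ultimately show ?thesis using j by (simp add: divide_le_eq mult.commute)
  qed
  have depends_on_prefix: "window_average I A \<phi> j x = window_average I A \<phi> j y"
    if "\<forall>i<n. x i = y i" "2 * j \<le> n" for x y n
    unfolding window_average_def using that
    by (intro arg_cong[where f = "\<lambda>s. s / real j"] sum.cong refl arg_cong[where f = \<phi>])
      (auto simp: extend_prefix_def)
  show ?thesis unfolding holder_continuous_def
  proof (rule exI[of _ "1::real"], intro conjI exI[of _ "\<bar>V 1\<bar> * exp (2 * real j)"] ballI allI impI)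
    fix x y n assume x: "x \<in> shift_space I A" and y: "y \<in> shift_space I A"
      and n: "1 \<le> n" and agree: "\<forall>i<n. x i = y i"
    show "\<bar>window_average I A \<phi> j x - window_average I A \<phi> j y\<bar> * exp (1 * real n) \<le> \<bar>V 1\<bar> * exp (2 * real j)"
    proof (cases "2 * j \<le> n")
      case False
      then have "exp (1 * real n) \<le> exp (2 * real j)" by simp
      moreover have "x 0 = y 0" using agree n by auto
      ultimately show ?thesis using diff_le[OF x y] by (intro mult_mono) auto
    qed (simp add: depends_on_prefix[OF agree])
  qed simp
qed

lemma extend_prefix_uniformly_close:
  fixes \<phi> :: "(nat \<Rightarrow> nat) \<Rightarrow> real"
  assumes K: "K \<subseteq> shift_space I A" "compact K"
    and cont: "continuous_on (shift_space I A) \<phi>" and e: "0 < e"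
  shows "\<exists>N. \<forall>l\<ge>N. \<forall>x\<in>K. \<bar>\<phi> (extend_prefix I A l x) - \<phi> x\<bar> < e"
proof (rule ccontr)
  assume "\<not> ?thesis"
  then have "\<forall>N. \<exists>l\<ge>N. \<exists>x\<in>K. e \<le> \<bar>\<phi> (extend_prefix I A l x) - \<phi> x\<bar>"
    by (auto simp: not_less)
  then obtain L X where L: "\<And>N. N \<le> L N" and X: "\<And>N. X N \<in> K"
    and far: "\<And>N. e \<le> \<bar>\<phi> (extend_prefix I A (L N) (X N)) - \<phi> (X N)\<bar>"
    by metis
  obtain x r where x: "x \<in> K" and r: "strict_mono r" and X_r: "(X \<circ> r) \<longlonglongrightarrow> x"
    using compact_imp_seq_compact[OF K(2)] X by (metis seq_compactE)
  have x_in: "x \<in> shift_space I A" and X_in: "\<And>k. X (r k) \<in> shift_space I A"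
    using x X K(1) by auto
  have L_r: "filterlim (\<lambda>k. L (r k)) at_top sequentially"
    using L seq_suble[OF r] le_trans by (intro filterlim_at_top_mono[OF filterlim_ident] always_eventually) blast
  have "((\<lambda>k. extend_prefix I A (L (r k)) (X (r k))) \<longlonglongrightarrow> x)"
    using extend_prefix_tendsto[OF X_r L_r] by (simp add: comp_def)
  moreover have "\<forall>\<^sub>F k in sequentially. extend_prefix I A (L (r k)) (X (r k)) \<in> shift_space I A"
    using L_r X_in extend_prefix_in_shift_space
    by (auto simp: filterlim_at_top elim!: allE[of _ 1] eventually_mono)
  ultimately have "(\<lambda>k. \<phi> (extend_prefix I A (L (r k)) (X (r k)))) \<longlonglongrightarrow> \<phi> x"
    by (rule continuous_on_tendsto_compose[OF cont _ x_in])
  moreover have "(\<lambda>k. \<phi> (X (r k))) \<longlonglongrightarrow> \<phi> x"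
    using continuous_on_tendsto_compose[OF cont X_r x_in] X_in by (simp add: comp_def)
  ultimately have "(\<lambda>k. \<bar>\<phi> (extend_prefix I A (L (r k)) (X (r k))) - \<phi> (X (r k))\<bar>) \<longlonglongrightarrow> \<bar>\<phi> x - \<phi> x\<bar>"
    by (intro tendsto_intros)
  then have "\<forall>\<^sub>F k in sequentially. \<bar>\<phi> (extend_prefix I A (L (r k)) (X (r k))) - \<phi> (X (r k))\<bar> < e"
    using e by (simp add: order_tendstoD)
  then obtain k where "\<bar>\<phi> (extend_prefix I A (L (r k)) (X (r k))) - \<phi> (X (r k))\<bar> < e"
    by (auto simp: eventually_sequentially)
  then show False using far[of "r k"] by linarith
qed

lemma window_average_uniform_limit:
  assumes K: "K \<subseteq> shift_space I A" "compact K"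
    and cont: "continuous_on (shift_space I A) \<phi>" and e: "0 < e"
  shows "\<forall>\<^sub>F j in sequentially. \<forall>x\<in>K. \<bar>window_average I A \<phi> j x - \<phi> x\<bar> < e"
proof -
  obtain N where N: "\<And>l x. N \<le> l \<Longrightarrow> x \<in> K \<Longrightarrow> \<bar>\<phi> (extend_prefix I A l x) - \<phi> x\<bar> < e / 2"
    using extend_prefix_uniformly_close[OF K cont, of "e / 2"] e by auto
  show ?thesis
  proof (rule eventually_sequentiallyI[of "max N 1"], intro ballI)
    fix j x assume j: "max N 1 \<le> j" and x: "x \<in> K"
    have "\<bar>\<Sum>l\<in>{j+1..2*j}. \<phi> (extend_prefix I A l x) - \<phi> x\<bar> \<le> (\<Sum>l\<in>{j+1..2*j}. e / 2)"
      using j x N by (intro order.trans[OF sum_abs] sum_mono less_imp_le) auto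
    moreover have "window_average I A \<phi> j x - \<phi> x = (\<Sum>l\<in>{j+1..2*j}. \<phi> (extend_prefix I A l x) - \<phi> x) / real j"
      using j unfolding window_average_def by (simp add: sum_subtractf field_simps)
    ultimately have "\<bar>window_average I A \<phi> j x - \<phi> x\<bar> \<le> e / 2"
      using j by (simp add: divide_le_eq mult.commute)
    then show "\<bar>window_average I A \<phi> j x - \<phi> x\<bar> < e" using e by linarith
  qed
qed

lemma asymp_symmetric_window_average:
  fixes \<Psi> :: "nat \<Rightarrow> 'g::group_add"
  assumes sym: "asymp_symmetric I A \<Psi> \<phi> \<alpha>" and var: "sum_variation_bounded I A \<phi> V"
    and V_nonneg: "\<And>n. 0 \<le> V n" and j: "1 \<le> j"
  shows "asymp_symmetric I A \<Psi> (window_average I A \<phi> j) (\<alpha> * exp (2 * window_max V j / real j))"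
proof (rule asymp_symmetric_perturb[OF sym var])
  show "0 \<le> 2 * window_max V j / real j" using window_max_nonneg[OF V_nonneg] by simp
  fix w x assume "x \<in> cylinder I A w"
  then have "\<bar>birkhoff_sum (window_average I A \<phi> j) (length w) x - birkhoff_sum \<phi> (length w) x\<bar>
      \<le> 2 * (real (length w) + real j) * window_max V j / real j"
    using birkhoff_sum_window_average_close[OF var _ j] by (simp add: cylinder_def)
  also have "\<dots> = 2 * window_max V j + 2 * window_max V j / real j * real (length w)"
    using j by (simp add: field_simps)
  finally show "\<bar>birkhoff_sum (window_average I A \<phi> j) (length w) x - birkhoff_sum \<phi> (length w) x\<bar>
      \<le> 2 * window_max V j + 2 * window_max V j / real j * real (length w)" .
qed

theorem lemma3p3:
  fixes I :: "nat set" and A :: "nat \<Rightarrow> nat \<Rightarrow> bool"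
    and \<Psi> :: "nat \<Rightarrow> 'g::{group_add, countable}"
    and \<phi> :: "(nat \<Rightarrow> nat) \<Rightarrow> real" and \<alpha> :: real
  assumes "\<alpha> \<ge> 1"
    and "medium_variation I A \<phi>"
    and "asymp_symmetric I A \<Psi> \<phi> \<alpha>"
  shows "\<exists>(\<phi>s :: nat \<Rightarrow> (nat \<Rightarrow> nat) \<Rightarrow> real) (D :: nat \<Rightarrow> real).
           (\<forall>j\<ge>1. holder_continuous I A (\<phi>s j) \<and> D j \<ge> 1 \<and>
                   asymp_symmetric I A \<Psi> (\<phi>s j) (\<alpha> * D j powr (1 / (2 * real j)))) \<and>
           (\<lambda>j. D j powr (1 / (2 * real j))) \<longlonglongrightarrow> 1 \<and>
           (\<forall>K. K \<subseteq> shift_space I A \<and> compact K \<longrightarrow>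
              (\<forall>e>0. \<forall>\<^sub>F j in sequentially. \<forall>x\<in>K. \<bar>\<phi>s j x - \<phi> x\<bar> < e))"
proof -
  obtain V where var: "sum_variation_bounded I A \<phi> V" and V_nonneg: "\<And>n. 0 \<le> V n"
    and V: "(\<lambda>n. V n / real n) \<longlonglongrightarrow> 0"
    using medium_variation_imp_sum_variation_bounded[OF assms(2)] by blast
  have cont: "continuous_on (shift_space I A) \<phi>"
    using assms(2) by (simp add: medium_variation_def)
  define D where "D j = exp (4 * window_max V j)" for j
  have D_root: "D j powr (1 / (2 * real j)) = exp (2 * window_max V j / real j)" if "1 \<le> j" for j
    using that by (simp add: D_def powr_def field_simps)
  have "(\<lambda>j. exp (2 * (window_max V j / real j))) \<longlonglongrightarrow> exp (2 * 0)"
    by (intro tendsto_intros window_max_div_tendsto_zero[OF V_nonneg V])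
  then have "(\<lambda>j. exp (2 * window_max V j / real j)) \<longlonglongrightarrow> 1" by simp
  then have "(\<lambda>j. D j powr (1 / (2 * real j))) \<longlonglongrightarrow> 1"
    by (rule Lim_transform_eventually) (use D_root in \<open>auto intro!: eventually_sequentiallyI[of 1]\<close>)
  moreover have "holder_continuous I A (window_average I A \<phi> j) \<and> D j \<ge> 1 \<and>
      asymp_symmetric I A \<Psi> (window_average I A \<phi> j) (\<alpha> * D j powr (1 / (2 * real j)))" if "1 \<le> j" for j
    using holder_continuous_window_average[OF var that] window_max_nonneg[OF V_nonneg, where j = j]
      asymp_symmetric_window_average[OF assms(3) var V_nonneg that] D_root[OF that]
    by (simp add: D_def)
  ultimately show ?thesis
    using window_average_uniform_limit[OF _ _ cont] by blast
qed

end
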